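(* Let $G$ be a connected graph, let $e=\{x,y\}$ and $f=\{u,v\}$ be edges of $G$, and consider the edges $e_{\bar{x}}=\{\bar{x},\overline{xy}\}$ and $f_{\bar{u}}=\{\bar{u},\overline{uv}\}$ of the full subdivision $S(G)$. If $e_{\bar{x}}\,\Theta^\ast_{S(G)}\,f_{\bar{u}}$, then $e\,\Theta^\ast_G\,f$.
   Context: For a connected graph $H$ with shortest-path distance $d_H$, two edges $\{x,y\}$ and $\{u,v\}$ of $H$ are in relation $\Theta_H$ if $d_H(x,u)+d_H(y,v)\neq d_H(x,v)+d_H(y,u)$; $\Theta^\ast_H$ denotes the transitive closure of $\Theta_H$ (an equivalence relation on $E(H)$). The full subdivision $S(G)$ is obtained by subdividing every edge of $G$ exactly once; the vertex of $S(G)$ corresponding to a vertex $x$ of $G$ is denoted $\bar{x}$, and the vertex subdividing the edge $\{x,y\}$ is denoted $\overline{xy}$. For $e=\{x,y\}\in E(G)$, $e_{\bar{x}}=\{\bar{x},\overline{xy}\}$ and $e_{\bar{y}}=\{\bar{y},\overline{xy}\}$. *)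

theory Defs
  imports Main
begin

definition graph :: "'a set \<Rightarrow> 'a set set \<Rightarrow> bool" where
  "graph V E \<longleftrightarrow> (\<forall>e\<in>E. \<exists>x y. x \<noteq> y \<and> x \<in> V \<and> y \<in> V \<and> e = {x, y})"

definition walk :: "'a set \<Rightarrow> 'a set set \<Rightarrow> 'a list \<Rightarrow> bool" where
  "walk V E xs \<longleftrightarrow> xs \<noteq> [] \<and> set xs \<subseteq> V \<and>
     (\<forall>i. Suc i < length xs \<longrightarrow> {xs ! i, xs ! Suc i} \<in> E)"

definition connected_graph :: "'a set \<Rightarrow> 'a set set \<Rightarrow> bool" where
  "connected_graph V E \<longleftrightarrow> V \<noteq> {} \<and>
     (\<forall>x\<in>V. \<forall>y\<in>V. \<exists>xs. walk V E xs \<and> hd xs = x \<and> last xs = y)"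

definition gdist :: "'a set \<Rightarrow> 'a set set \<Rightarrow> 'a \<Rightarrow> 'a \<Rightarrow> nat" where
  "gdist V E x y = (LEAST n. \<exists>xs. walk V E xs \<and> hd xs = x \<and> last xs = y \<and> length xs = Suc n)"

definition Theta :: "'a set \<Rightarrow> 'a set set \<Rightarrow> ('a set \<times> 'a set) set" where
  "Theta V E = {(e, f). e \<in> E \<and> f \<in> E \<and>
     (\<exists>x y u v. e = {x, y} \<and> f = {u, v} \<and>
        gdist V E x u + gdist V E y v \<noteq> gdist V E x v + gdist V E y u)}"

definition Theta_star :: "'a set \<Rightarrow> 'a set set \<Rightarrow> ('a set \<times> 'a set) set" where
  "Theta_star V E = (Theta V E)\<^sup>+"

text \<open>Vertices of the full subdivision: original vertices and subdivision vertices (one per edge).\<close>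
datatype 'a svert = Orig 'a | Sub "'a set"

definition subdiv_V :: "'a set \<Rightarrow> 'a set set \<Rightarrow> 'a svert set" where
  "subdiv_V V E = Orig ` V \<union> Sub ` E"

definition subdiv_E :: "'a set set \<Rightarrow> 'a svert set set" where
  "subdiv_E E = {{Orig x, Sub e} | x e. e \<in> E \<and> x \<in> e}"

end

theory Submission
  imports Defs
begin

text \<open>Distances in the full subdivision \<open>S(G)\<close> are explicit: two original vertices are at twice
  their distance in \<open>G\<close>, and otherwise one takes twice the distance between nearest endpoints and adds
  one for each subdivision vertex involved. If \<open>e = {a, a'}\<close> and \<open>f = {b, b'}\<close> are distinct
  edges with \<open>d(a,b) + d(a',b') = d(a,b') + d(a',b)\<close>, these formulas turn this four-point
  condition into the corresponding one for \<open>e\<^sub>a\<close> and \<open>f\<^sub>b\<close> in \<open>S(G)\<close>. So projecting each edge of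
  \<open>S(G)\<close> to the edge of \<open>G\<close> it subdivides maps \<open>\<Theta>\<close> of \<open>S(G)\<close> into \<open>\<Theta>\<close> of \<open>G\<close>, and hence
  also their transitive closures.\<close>

lemma walk_Cons:
  "walk V E (x # ys) \<longleftrightarrow> x \<in> V \<and> (ys = [] \<or> {x, hd ys} \<in> E \<and> walk V E ys)"
proof (cases ys)
  case (Cons y zs)
  have "(\<forall>i. Suc i < length (x # ys) \<longrightarrow> {(x # ys) ! i, (x # ys) ! Suc i} \<in> E) \<longleftrightarrow>
        {x, y} \<in> E \<and> (\<forall>i. Suc i < length ys \<longrightarrow> {ys ! i, ys ! Suc i} \<in> E)"
    unfolding Cons by (auto simp: less_Suc_eq_0_disj)
  then show ?thesis
    unfolding walk_def using Cons by auto
qed (simp add: walk_def)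

lemma graph_edgeE:
  assumes "graph V E" "e \<in> E"
  obtains p q where "p \<noteq> q" "p \<in> V" "q \<in> V" "e = {p, q}"
  using assms unfolding graph_def by blast

lemma graph_edgeD:
  assumes "graph V E" "{x, y} \<in> E"
  shows "x \<in> V" "y \<in> V" "x \<noteq> y"
  using graph_edgeE[OF assms] by (metis doubleton_eq_iff)+

lemma graph_edge_other_end:
  assumes "graph V E" "e \<in> E" "a \<in> e"
  obtains a' where "a' \<noteq> a" "e = {a, a'}"
  using graph_edgeE[OF assms(1,2)] assms(3) by (metis insert_commute insert_iff singletonD)

lemma gdist_le_walk:
  assumes "walk V E xs"
  shows "gdist V E (hd xs) (last xs) \<le> length xs - 1"
proof -
  have "length xs = Suc (length xs - 1)"
    using assms by (simp add: walk_def)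
  with assms show ?thesis
    unfolding gdist_def by (intro Least_le) blast
qed

lemma shortest_walk_exists:
  assumes "walk V E xs" "hd xs = x" "last xs = z"
  obtains ys where "walk V E ys" "hd ys = x" "last ys = z" "length ys = Suc (gdist V E x z)"
proof -
  have "length xs = Suc (length xs - 1)"
    using assms(1) by (simp add: walk_def)
  with assms have "\<exists>n xs. walk V E xs \<and> hd xs = x \<and> last xs = z \<and> length xs = Suc n"
    by blast
  from LeastI_ex[OF this] show thesis
    using that unfolding gdist_def by blast
qed

lemma lipschitz_le_walk_length:
  assumes "walk V E xs"
    and diag: "\<And>x. x \<in> V \<Longrightarrow> f x x = 0"
    and lip: "\<And>x y z. {x, y} \<in> E \<Longrightarrow> z \<in> V \<Longrightarrow> f x z \<le> Suc (f y z)"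
  shows "f (hd xs) (last xs) \<le> length xs - 1"
  using assms(1)
proof (induction xs)
  case (Cons x ys)
  show ?case
  proof (cases ys)
    case Nil
    then show ?thesis using Cons.prems diag by (simp add: walk_def)
  next
    case (Cons y zs)
    with Cons.prems have "{x, y} \<in> E" "walk V E ys" by (auto simp: walk_Cons)
    moreover from this have "last ys \<in> V"
      by (auto simp: walk_def)
    ultimately show ?thesis
      using Cons.IH lip[of x y "last ys"] \<open>ys = y # zs\<close> by fastforce
  qed
qed (simp add: walk_def)

lemma gdist_unique:
  assumes "graph V E"
    and diag: "\<And>x. x \<in> V \<Longrightarrow> f x x = 0"
    and lip: "\<And>x y z. {x, y} \<in> E \<Longrightarrow> z \<in> V \<Longrightarrow> f x z \<le> Suc (f y z)"
    and descent: "\<And>x z. x \<in> V \<Longrightarrow> z \<in> V \<Longrightarrow> x \<noteq> z \<Longrightarrow> \<exists>y. {x, y} \<in> E \<and> f x z = Suc (f y z)"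
    and "x \<in> V" "z \<in> V"
  shows "gdist V E x z = f x z"
proof -
  have walk_ex: "\<exists>xs. walk V E xs \<and> hd xs = x \<and> last xs = z \<and> length xs = Suc n"
    if "x \<in> V" "f x z = n" for x n
    using that
  proof (induction n arbitrary: x)
    case 0
    then have "x = z" using descent \<open>z \<in> V\<close> by fastforce
    then show ?case using \<open>z \<in> V\<close> by (intro exI[of _ "[z]"]) (simp add: walk_def)
  next
    case (Suc n)
    then have "x \<noteq> z" using diag by auto
    then obtain y where y: "{x, y} \<in> E" "f x z = Suc (f y z)"
      using descent Suc.prems \<open>z \<in> V\<close> by blast
    moreover have "y \<in> V" using graph_edgeD[OF assms(1) y(1)] by simp
    ultimately obtain ys where "walk V E ys" "hd ys = y" "last ys = z" "length ys = Suc n"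
      using Suc by auto
    with y Suc.prems show ?case
      by (intro exI[of _ "x # ys"]) (auto simp: walk_Cons)
  qed
  obtain xs where xs: "walk V E xs" "hd xs = x" "last xs = z" "length xs = Suc (f x z)"
    using walk_ex \<open>x \<in> V\<close> by blast
  obtain ys where ys: "walk V E ys" "hd ys = x" "last ys = z" "length ys = Suc (gdist V E x z)"
    using shortest_walk_exists[OF xs(1-3)] by blast
  show ?thesis
    using gdist_le_walk[OF xs(1)] lipschitz_le_walk_length[where f = f, OF ys(1) diag lip] xs ys by simp
qed

context
  fixes V :: "'a set" and E :: "'a set set"
  assumes graph: "graph V E" and connected: "connected_graph V E"
begin

lemma gdist_shortest_walk:
  assumes "x \<in> V" "z \<in> V"
  obtains xs where "walk V E xs" "hd xs = x" "last xs = z" "length xs = Suc (gdist V E x z)"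
  using connected assms shortest_walk_exists unfolding connected_graph_def by metis

lemma gdist_self: "x \<in> V \<Longrightarrow> gdist V E x x = 0"
  using gdist_le_walk[of V E "[x]"] by (simp add: walk_def)

lemma gdist_eq_0_iff:
  assumes "x \<in> V" "z \<in> V"
  shows "gdist V E x z = 0 \<longleftrightarrow> x = z"
  using gdist_shortest_walk[OF assms] gdist_self assms
  by (metis length_0_conv length_Suc_conv last_ConsL list.sel(1))

lemma gdist_edge_le:
  assumes "{x, y} \<in> E" "z \<in> V"
  shows "gdist V E x z \<le> Suc (gdist V E y z)"
proof -
  obtain ys where ys: "walk V E ys" "hd ys = y" "last ys = z" "length ys = Suc (gdist V E y z)"
    using gdist_shortest_walk graph_edgeD[OF graph assms(1)] assms(2) by metis
  then have "walk V E (x # ys)"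
    using assms graph_edgeD[OF graph assms(1)] by (auto simp: walk_Cons)
  from gdist_le_walk[OF this] ys show ?thesis by (simp split: if_splits)
qed

lemma gdist_descent:
  assumes "x \<in> V" "z \<in> V" "x \<noteq> z"
  obtains y where "{x, y} \<in> E" "gdist V E x z = Suc (gdist V E y z)"
proof -
  obtain xs where xs: "walk V E xs" "hd xs = x" "last xs = z" "length xs = Suc (gdist V E x z)"
    using gdist_shortest_walk assms by blast
  then obtain y ys where "xs = x # y # ys"
    using assms(3) by (cases xs rule: remdups_adj.cases) auto
  with xs have y: "{x, y} \<in> E" and "walk V E (y # ys)" by (auto simp: walk_Cons)
  from gdist_le_walk[OF this(2)] have "gdist V E y z \<le> length ys"
    using xs \<open>xs = x # y # ys\<close> by simp
  moreover have "gdist V E x z = Suc (length ys)"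
    using xs \<open>xs = x # y # ys\<close> by simp
  ultimately show ?thesis
    using gdist_edge_le[OF y assms(2)] that y by force
qed

end

definition setdist :: "('a \<Rightarrow> 'a \<Rightarrow> nat) \<Rightarrow> 'a set \<Rightarrow> 'a set \<Rightarrow> nat" where
  "setdist d X Y = Min (case_prod d ` (X \<times> Y))"

lemma setdist_le:
  "finite X \<Longrightarrow> finite Y \<Longrightarrow> p \<in> X \<Longrightarrow> q \<in> Y \<Longrightarrow> setdist d X Y \<le> d p q"
  unfolding setdist_def by (rule Min_le) auto

lemma setdist_attained:
  assumes "finite X" "finite Y" "X \<noteq> {}" "Y \<noteq> {}"
  obtains p q where "p \<in> X" "q \<in> Y" "setdist d X Y = d p q"
proof -
  have "setdist d X Y \<in> case_prod d ` (X \<times> Y)"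
    unfolding setdist_def using assms by (intro Min_in) auto
  then show thesis using that by auto
qed

lemma setdist_antimono:
  assumes "finite X'" "finite Y" "X \<noteq> {}" "Y \<noteq> {}" "X \<subseteq> X'"
  shows "setdist d X' Y \<le> setdist d X Y"
  unfolding setdist_def using assms by (intro Min_antimono) auto

lemma setdist_doubletons:
  "setdist d {a, a'} {b, b'} = min (min (d a b) (d a b')) (min (d a' b) (d a' b'))"
  "setdist d {a} {b, b'} = min (d a b) (d a b')"
  "setdist d {a, a'} {b} = min (d a b) (d a' b)"
  "setdist d {a} {b} = d a b"
  by (simp_all add: setdist_def min.assoc min.left_commute)

fun svert_ends :: "'a svert \<Rightarrow> 'a set" where
  "svert_ends (Orig a) = {a}"
| "svert_ends (Sub e) = e"

fun svert_depth :: "'a svert \<Rightarrow> nat" where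
  "svert_depth (Orig a) = 0"
| "svert_depth (Sub e) = 1"

text \<open>A shortest path of \<open>S(G)\<close> from \<open>v\<close> to \<open>w \<noteq> v\<close> runs from \<open>v\<close> to a nearest pair of
  original endpoints \<open>p\<close>, \<open>q\<close> and along a shortest \<open>p\<close>--\<open>q\<close> path of \<open>G\<close> with every edge subdivided.\<close>

definition subdiv_dist :: "('a \<Rightarrow> 'a \<Rightarrow> nat) \<Rightarrow> 'a svert \<Rightarrow> 'a svert \<Rightarrow> nat" where
  "subdiv_dist d v w = (if v = w then 0
     else 2 * setdist d (svert_ends v) (svert_ends w) + svert_depth v + svert_depth w)"

lemma graph_subdiv:
  assumes "graph V E"
  shows "graph (subdiv_V V E) (subdiv_E E)"
  unfolding graph_def
proof
  fix X assume "X \<in> subdiv_E E"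
  then obtain a e where "X = {Orig a, Sub e}" "e \<in> E" "a \<in> e"
    unfolding subdiv_E_def by blast
  moreover from this have "a \<in> V"
    using graph_edgeE[OF assms] by blast
  ultimately show "\<exists>x y. x \<noteq> y \<and> x \<in> subdiv_V V E \<and> y \<in> subdiv_V V E \<and> X = {x, y}"
    unfolding subdiv_V_def by blast
qed

lemma subdiv_E_iff: "{Orig a, Sub e} \<in> subdiv_E E \<longleftrightarrow> e \<in> E \<and> a \<in> e"
  unfolding subdiv_E_def by (auto simp: doubleton_eq_iff)

lemma subdiv_E_elim:
  assumes "X \<in> subdiv_E E"
  obtains a e where "X = {Orig a, Sub e}" "e \<in> E" "a \<in> e"
  using assms unfolding subdiv_E_def by blast

lemma svert_ends_subdiv_V:
  assumes "graph V E" "v \<in> subdiv_V V E"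
  shows "finite (svert_ends v) \<and> svert_ends v \<noteq> {} \<and> svert_ends v \<subseteq> V"
proof -
  consider a where "v = Orig a" "a \<in> V" | e where "v = Sub e" "e \<in> E"
    using assms(2) unfolding subdiv_V_def by blast
  then show ?thesis
  proof cases
    case (2 e)
    then show ?thesis by (elim graph_edgeE[OF assms(1)]) auto
  qed simp
qed

context
  fixes V :: "'a set" and E :: "'a set set"
  assumes graph: "graph V E" and connected: "connected_graph V E"
begin

lemma setdist_gdist_eq_0:
  assumes "finite X" "finite Y" "a \<in> X" "a \<in> Y" "a \<in> V"
  shows "setdist (gdist V E) X Y = 0"
  using setdist_le[OF assms(1-4), of "gdist V E"] gdist_self[OF graph connected assms(5)] by simp

lemma setdist_edge_bounds:
  assumes "e \<in> E" "a \<in> e" "finite Y" "Y \<noteq> {}" "Y \<subseteq> V"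
  shows "setdist (gdist V E) e Y \<le> setdist (gdist V E) {a} Y"
    and "setdist (gdist V E) {a} Y \<le> Suc (setdist (gdist V E) e Y)"
proof -
  obtain a' where a': "e = {a, a'}" "a' \<noteq> a"
    using graph_edge_other_end[OF graph assms(1,2)] by metis
  then show "setdist (gdist V E) e Y \<le> setdist (gdist V E) {a} Y"
    using assms by (intro setdist_antimono) auto
  obtain p q where pq: "p \<in> e" "q \<in> Y" "setdist (gdist V E) e Y = gdist V E p q"
    using setdist_attained[of e Y] assms a' by blast
  have "gdist V E a q \<le> Suc (gdist V E p q)"
    using pq a' assms gdist_edge_le[OF graph connected, of a a' q] by auto
  then show "setdist (gdist V E) {a} Y \<le> Suc (setdist (gdist V E) e Y)"
    using setdist_le[of "{a}" Y a q "gdist V E"] pq assms by simp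
qed

text \<open>\<open>S(G)\<close> is bipartite, so the distances from \<open>z\<close> to the ends of an edge differ by exactly one.\<close>

lemma subdiv_dist_adjacent:
  assumes "e \<in> E" "a \<in> e" "z \<in> subdiv_V V E"
  shows "subdiv_dist (gdist V E) (Orig a) z = Suc (subdiv_dist (gdist V E) (Sub e) z)
       \<or> subdiv_dist (gdist V E) (Sub e) z = Suc (subdiv_dist (gdist V E) (Orig a) z)"
proof -
  let ?Y = "svert_ends z"
  have Y: "finite ?Y" "?Y \<noteq> {}" "?Y \<subseteq> V"
    using svert_ends_subdiv_V[OF graph assms(3)] by auto
  have fin_e: "finite e"
    using graph_edgeE[OF graph assms(1)] by blast
  have aV: "a \<in> V"
    using graph_edgeE[OF graph assms(1)] assms(2) by blast
  consider "z = Orig a" | "z = Sub e" | "z \<noteq> Orig a" "z \<noteq> Sub e"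
    by blast
  then show ?thesis
  proof cases
    case 1
    then have "setdist (gdist V E) e ?Y = 0"
      using setdist_gdist_eq_0[of e ?Y a] fin_e assms aV by simp
    then show ?thesis using 1 by (simp add: subdiv_dist_def)
  next
    case 2
    then have "setdist (gdist V E) {a} ?Y = 0"
      using setdist_gdist_eq_0[of "{a}" ?Y a] fin_e assms aV by simp
    then show ?thesis using 2 by (simp add: subdiv_dist_def)
  next
    case 3
    then show ?thesis
      using setdist_edge_bounds[OF assms(1,2) Y] by (auto simp: subdiv_dist_def)
  qed
qed

lemma subdiv_dist_edge_le:
  assumes "{v, w} \<in> subdiv_E E" "z \<in> subdiv_V V E"
  shows "subdiv_dist (gdist V E) v z \<le> Suc (subdiv_dist (gdist V E) w z)"
proof -
  obtain a e where "{v, w} = {Orig a, Sub e}" "e \<in> E" "a \<in> e"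
    using subdiv_E_elim[OF assms(1)] by blast
  then show ?thesis
    using subdiv_dist_adjacent[of e a z] assms(2) by (auto simp: doubleton_eq_iff)
qed

lemma subdiv_dist_descent:
  assumes "v \<in> subdiv_V V E" "z \<in> subdiv_V V E" "v \<noteq> z"
  shows "\<exists>w. {v, w} \<in> subdiv_E E \<and> subdiv_dist (gdist V E) v z = Suc (subdiv_dist (gdist V E) w z)"
proof -
  let ?sd = "subdiv_dist (gdist V E)" and ?Y = "svert_ends z"
  have Y: "finite ?Y" "?Y \<noteq> {}" "?Y \<subseteq> V"
    using svert_ends_subdiv_V[OF graph assms(2)] by auto
  have "\<exists>w. {v, w} \<in> subdiv_E E \<and> ?sd w z < ?sd v z"
  proof -
    consider a where "v = Orig a" "a \<in> V" "a \<in> ?Y" | a where "v = Orig a" "a \<in> V" "a \<notin> ?Y"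
      | e where "v = Sub e" "e \<in> E"
      using assms(1) unfolding subdiv_V_def by blast
    then show ?thesis
    proof cases
      case (1 a)
      then obtain f where f: "z = Sub f" "f \<in> E" "a \<in> f"
        using assms(2,3) by (cases z) (auto simp: subdiv_V_def)
      then have "?sd v z = 1"
        using 1 setdist_gdist_eq_0[of "{a}" f a] Y by (simp add: subdiv_dist_def)
      then show ?thesis
        using 1 f by (intro exI[of _ z]) (simp add: subdiv_dist_def subdiv_E_iff)
    next
      case (2 a)
      obtain q where q: "q \<in> ?Y" "setdist (gdist V E) {a} ?Y = gdist V E a q"
        using setdist_attained[of "{a}" ?Y] Y by blast
      then obtain c where c: "{a, c} \<in> E" "gdist V E a q = Suc (gdist V E c q)"
        using gdist_descent[OF graph connected, of a q] 2 Y by blast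
      have "setdist (gdist V E) {a, c} ?Y \<le> gdist V E c q"
        using setdist_le[of "{a, c}" ?Y c q] q Y by simp
      moreover have "Sub {a, c} \<noteq> z"
        using 2 by auto
      ultimately have "?sd (Sub {a, c}) z < ?sd v z"
        using 2 assms(3) q c by (simp add: subdiv_dist_def)
      moreover have "{v, Sub {a, c}} \<in> subdiv_E E"
        using 2 c by (simp add: subdiv_E_iff)
      ultimately show ?thesis by blast
    next
      case (3 e)
      obtain p q where pq: "p \<in> e" "q \<in> ?Y" "setdist (gdist V E) e ?Y = gdist V E p q"
        using setdist_attained[of e ?Y] Y graph_edgeE[OF graph \<open>e \<in> E\<close>] by blast
      have "?sd (Orig p) z < ?sd v z"
        using setdist_le[of "{p}" ?Y p q "gdist V E"] pq Y 3 assms(3)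
        by (auto simp: subdiv_dist_def)
      moreover have "{v, Orig p} \<in> subdiv_E E"
        using 3 pq by (simp add: subdiv_E_iff insert_commute)
      ultimately show ?thesis by blast
    qed
  qed
  then show ?thesis
    using subdiv_dist_edge_le assms(2) by (metis Suc_leI le_antisym)
qed

lemma gdist_subdiv:
  assumes "v \<in> subdiv_V V E" "w \<in> subdiv_V V E"
  shows "gdist (subdiv_V V E) (subdiv_E E) v w = subdiv_dist (gdist V E) v w"
  using gdist_unique[OF graph_subdiv[OF graph], of "subdiv_dist (gdist V E)"]
    subdiv_dist_edge_le subdiv_dist_descent assms
  by (simp add: subdiv_dist_def)

end

lemma Theta_iff:
  "({x, y}, {u, v}) \<in> Theta V E \<longleftrightarrow> {x, y} \<in> E \<and> {u, v} \<in> E \<and>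
     gdist V E x u + gdist V E y v \<noteq> gdist V E x v + gdist V E y u"
  unfolding Theta_def by (auto simp: doubleton_eq_iff)

lemma trancl_map:
  assumes "\<And>x y. (x, y) \<in> r \<Longrightarrow> (f x, f y) \<in> s" "(x, y) \<in> r\<^sup>+"
  shows "(f x, f y) \<in> s\<^sup>+"
  using assms(2) by induction (auto intro: assms(1) trancl_into_trancl)

text \<open>With \<open>p = d(a,b)\<close>, \<open>q = d(a,b')\<close>, \<open>r = d(a',b)\<close>, \<open>s = d(a',b')\<close>, this identity is the passage
  from the four-point condition for \<open>{a, a'}\<close>, \<open>{b, b'}\<close> in \<open>G\<close> to the one for their halves in \<open>S(G)\<close>.\<close>

lemma min_four_point:
  fixes p q r s :: nat
  assumes "p + s = q + r" "p \<le> Suc r" "r \<le> Suc p" "q \<le> Suc s" "s \<le> Suc q"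
  shows "p + min (min p q) (min r s) = min p q + min p r"
  using assms by (simp add: min_def)

definition subdivided_edge :: "'a svert set \<Rightarrow> 'a set" where
  "subdivided_edge X = (THE e. Sub e \<in> X)"

lemma subdivided_edge_eq [simp]: "subdivided_edge {Orig a, Sub e} = e"
  unfolding subdivided_edge_def by (rule the_equality) auto

context
  fixes V :: "'a set" and E :: "'a set set"
  assumes graph: "graph V E" and connected: "connected_graph V E"
begin

lemma Theta_refl:
  assumes "e \<in> E"
  shows "(e, e) \<in> Theta V E"
proof -
  obtain p q where "p \<noteq> q" "p \<in> V" "q \<in> V" "e = {p, q}"
    using graph_edgeE[OF graph assms] by blast
  with assms show ?thesis
    by (simp add: Theta_iff gdist_self[OF graph connected] gdist_eq_0_iff[OF graph connected])
qed

lemma Theta_subdiv_edge_pair: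
  assumes "({Orig a, Sub e}, {Orig b, Sub f}) \<in> Theta (subdiv_V V E) (subdiv_E E)"
    and "e \<in> E" "a \<in> e" "f \<in> E" "b \<in> f"
  shows "(e, f) \<in> Theta V E"
proof (cases "e = f")
  case True
  then show ?thesis using Theta_refl[OF \<open>e \<in> E\<close>] by simp
next
  case False
  obtain a' where a': "e = {a, a'}" "a' \<noteq> a"
    using graph_edge_other_end[OF graph assms(2,3)] by metis
  obtain b' where b': "f = {b, b'}" "b' \<noteq> b"
    using graph_edge_other_end[OF graph assms(4,5)] by metis
  have V: "a \<in> V" "a' \<in> V" "b \<in> V" "b' \<in> V"
    using graph_edgeD[OF graph] a' b' assms by blast+
  let ?d = "gdist V E" and ?dS = "gdist (subdiv_V V E) (subdiv_E E)"
  have "\<not> (?d a b + ?d a' b' = ?d a b' + ?d a' b)"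
  proof
    assume flat: "?d a b + ?d a' b' = ?d a b' + ?d a' b"
    have lip: "?d a b \<le> Suc (?d a' b)" "?d a' b \<le> Suc (?d a b)"
      "?d a b' \<le> Suc (?d a' b')" "?d a' b' \<le> Suc (?d a b')"
      using gdist_edge_le[OF graph connected] assms(2) V unfolding a'(1)
      by (simp_all add: insert_commute)
    have SV: "Orig a \<in> subdiv_V V E" "Orig b \<in> subdiv_V V E"
      "Sub e \<in> subdiv_V V E" "Sub f \<in> subdiv_V V E"
      using V assms unfolding subdiv_V_def by auto
    note dS = gdist_subdiv[OF graph connected]
    have "?dS (Orig a) (Orig b) = 2 * ?d a b"
      using dS[OF SV(1) SV(2)] V gdist_self[OF graph connected]
      by (simp add: subdiv_dist_def setdist_doubletons)
    moreover have "?dS (Sub e) (Sub f) = 2 + 2 * min (min (?d a b) (?d a b')) (min (?d a' b) (?d a' b'))"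
      using dS[OF SV(3) SV(4)] False by (simp add: subdiv_dist_def a' b' setdist_doubletons)
    moreover have "?dS (Orig a) (Sub f) = 1 + 2 * min (?d a b) (?d a b')"
      using dS[OF SV(1) SV(4)] by (simp add: subdiv_dist_def b' setdist_doubletons)
    moreover have "?dS (Sub e) (Orig b) = 1 + 2 * min (?d a b) (?d a' b)"
      using dS[OF SV(3) SV(2)] by (simp add: subdiv_dist_def a' setdist_doubletons)
    ultimately have
      "?dS (Orig a) (Orig b) + ?dS (Sub e) (Sub f) = ?dS (Orig a) (Sub f) + ?dS (Sub e) (Orig b)"
      using min_four_point[OF flat lip] by simp
    then show False
      using assms(1) by (simp add: Theta_iff)
  qed
  then show ?thesis
    using assms a' b' by (auto simp: Theta_iff)
qed

lemma Theta_subdiv_imp_Theta: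
  assumes "(X, Y) \<in> Theta (subdiv_V V E) (subdiv_E E)"
  shows "(subdivided_edge X, subdivided_edge Y) \<in> Theta V E"
proof -
  have "X \<in> subdiv_E E" "Y \<in> subdiv_E E"
    using assms unfolding Theta_def by auto
  then show ?thesis
    using assms Theta_subdiv_edge_pair by (elim subdiv_E_elim) auto
qed

end

theorem corollary3p2:
  fixes V :: "'a set" and E :: "'a set set" and x y u v :: 'a
  assumes "graph V E" and "finite V" and "connected_graph V E"
    and "{x, y} \<in> E" and "{u, v} \<in> E"
    and "({Orig x, Sub {x, y}}, {Orig u, Sub {u, v}}) \<in> Theta_star (subdiv_V V E) (subdiv_E E)"
  shows "({x, y}, {u, v}) \<in> Theta_star V E"
  using trancl_map[where f = subdivided_edge, OF Theta_subdiv_imp_Theta[OF assms(1,3)]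
      assms(6)[unfolded Theta_star_def]]
  by (simp add: Theta_star_def)

end
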